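(* For every positive integer $N$ there exist a connected simple graph $G$ and a vertex $v\in V(G)$ which is not a cut vertex of $G$ such that $|\chi_{dom}(G)-\chi_{dom}(G-v)|\geq N$. (For instance, $G$ a wheel $W_n$ with $n$ large and $v$ its center, so that $G-v$ is the cycle $C_n$.)
   Context: All graphs are finite and simple. A dominated coloring of a graph $H$ is a proper vertex coloring of $H$ such that for every color class $C$ there is a vertex $x\in V(H)$ adjacent to every vertex of $C$. The dominated chromatic number $\chi_{dom}(H)$ is the minimum number of colors in a dominated coloring of $H$. $G-v$ denotes the graph obtained from $G$ by deleting $v$ and all edges incident with $v$. The wheel $W_n$ is the graph obtained from the cycle $C_n$ by adding one new vertex (the center) adjacent to all vertices of the cycle. *)

theory Defs
  imports Main
begin

definition simple_graph :: "'a set \<Rightarrow> 'a set set \<Rightarrow> bool" where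
  "simple_graph V E \<longleftrightarrow> finite V \<and> (\<forall>e\<in>E. e \<subseteq> V \<and> card e = 2)"

definition adj :: "'a set set \<Rightarrow> 'a \<Rightarrow> 'a \<Rightarrow> bool" where
  "adj E x y \<longleftrightarrow> {x, y} \<in> E"

fun is_walk :: "'a set \<Rightarrow> 'a set set \<Rightarrow> 'a list \<Rightarrow> bool" where
  "is_walk V E [] \<longleftrightarrow> False"
| "is_walk V E [x] \<longleftrightarrow> x \<in> V"
| "is_walk V E (x # y # xs) \<longleftrightarrow> x \<in> V \<and> adj E x y \<and> is_walk V E (y # xs)"

definition connected_graph :: "'a set \<Rightarrow> 'a set set \<Rightarrow> bool" where
  "connected_graph V E \<longleftrightarrow> V \<noteq> {} \<and>
     (\<forall>x\<in>V. \<forall>y\<in>V. \<exists>p. is_walk V E p \<and> hd p = x \<and> last p = y)"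

definition del_vertex_V :: "'a set \<Rightarrow> 'a \<Rightarrow> 'a set" where
  "del_vertex_V V v = V - {v}"

definition del_vertex_E :: "'a set set \<Rightarrow> 'a \<Rightarrow> 'a set set" where
  "del_vertex_E E v = {e \<in> E. v \<notin> e}"

definition cut_vertex :: "'a set \<Rightarrow> 'a set set \<Rightarrow> 'a \<Rightarrow> bool" where
  "cut_vertex V E v \<longleftrightarrow> v \<in> V \<and> \<not> connected_graph (del_vertex_V V v) (del_vertex_E E v)"

definition dominated_coloring :: "'a set \<Rightarrow> 'a set set \<Rightarrow> ('a \<Rightarrow> nat) \<Rightarrow> nat \<Rightarrow> bool" where
  "dominated_coloring V E c k \<longleftrightarrow>
     (\<forall>x\<in>V. c x < k) \<and>
     (\<forall>x\<in>V. \<forall>y\<in>V. adj E x y \<longrightarrow> c x \<noteq> c y) \<and>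
     (\<forall>i<k. (\<exists>z\<in>V. c z = i) \<longrightarrow> (\<exists>x\<in>V. \<forall>z\<in>V. c z = i \<longrightarrow> adj E x z))"

definition is_chi_dom :: "'a set \<Rightarrow> 'a set set \<Rightarrow> nat \<Rightarrow> bool" where
  "is_chi_dom V E k \<longleftrightarrow> (\<exists>c. dominated_coloring V E c k) \<and>
     (\<forall>j c. dominated_coloring V E c j \<longrightarrow> k \<le> j)"

end

theory Submission
  imports Defs
begin

text \<open>The fan on \<open>n\<close> blades is the path \<open>1 - 2 - \<dots> - n\<close> together with a centre \<open>0\<close> adjacent
  to all of it. Colouring the centre by itself and the path vertices by parity is a dominated
  colouring with three colours (the centre dominates both parity classes). Deleting the centre
  leaves the path, which stays connected; but in a path a vertex dominates at most two vertices,
  so every dominated colouring of it needs at least \<open>n / 2\<close> colours.\<close>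

definition path_edges :: "nat \<Rightarrow> nat set set" where
  "path_edges n = {{i, Suc i} |i. 1 \<le> i \<and> i < n}"

definition fan_edges :: "nat \<Rightarrow> nat set set" where
  "fan_edges n = path_edges n \<union> {{0, i} |i. 1 \<le> i \<and> i \<le> n}"

lemma is_walk_mono:
  "is_walk V E p \<Longrightarrow> V \<subseteq> V' \<Longrightarrow> E \<subseteq> E' \<Longrightarrow> is_walk V' E' p"
  by (induction V E p rule: is_walk.induct) (auto simp: adj_def)

lemma is_walk_snoc:
  "is_walk V E p \<Longrightarrow> adj E (last p) x \<Longrightarrow> x \<in> V \<Longrightarrow> is_walk V E (p @ [x])"
  by (induction V E p rule: is_walk.induct) auto

lemma is_walk_rev: "is_walk V E p \<Longrightarrow> is_walk V E (rev p)"
proof (induction V E p rule: is_walk.induct)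
  case (3 V E x y xs)
  then have "is_walk V E (rev (y # xs))" "adj E (last (rev (y # xs))) x"
    by (auto simp: adj_def insert_commute)
  with 3 show ?case using is_walk_snoc by fastforce
qed auto

lemma adj_simple_graph_neq: "simple_graph V E \<Longrightarrow> adj E x y \<Longrightarrow> x \<noteq> y"
  by (auto simp: simple_graph_def adj_def)

lemma is_chi_dom_exists:
  assumes "dominated_coloring V E c k"
  shows "\<exists>m \<le> k. is_chi_dom V E m"
proof -
  let ?m = "LEAST j. \<exists>c. dominated_coloring V E c j"
  have "is_chi_dom V E ?m" "?m \<le> k"
    unfolding is_chi_dom_def using assms by (auto intro: LeastI Least_le)
  then show ?thesis by blast
qed

text \<open>Without isolated vertices every colour class of an injective colouring is a single
  vertex, dominated by any of its neighbours.\<close>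

lemma dominated_coloring_inj:
  assumes "simple_graph V E" "\<forall>x\<in>V. \<exists>y\<in>V. adj E y x"
    and "inj_on c V" "\<forall>x\<in>V. c x < k"
  shows "dominated_coloring V E c k"
  unfolding dominated_coloring_def
proof (intro conjI ballI allI impI)
  fix x y assume "x \<in> V" "y \<in> V" "adj E x y"
  then show "c x \<noteq> c y"
    using adj_simple_graph_neq[OF assms(1)] inj_on_eq_iff[OF assms(3)] by blast
next
  fix i assume "\<exists>z\<in>V. c z = i"
  then obtain z where z: "z \<in> V" "c z = i" by blast
  then obtain y where "y \<in> V" "adj E y z" using assms(2) by blast
  moreover have "\<forall>z'\<in>V. c z' = i \<longrightarrow> z' = z" using z inj_on_eq_iff[OF assms(3)] by blast
  ultimately show "\<exists>x\<in>V. \<forall>z\<in>V. c z = i \<longrightarrow> adj E x z" by blast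
qed (use assms(4) in auto)

lemma card_le_degree_mult_dominated_colors:
  assumes "finite V" "dominated_coloring V E c k"
    and degree: "\<And>x. x \<in> V \<Longrightarrow> card {z \<in> V. adj E x z} \<le> d"
  shows "card V \<le> d * k"
proof -
  let ?class = "\<lambda>i. {z \<in> V. c z = i}"
  have cover: "V = (\<Union>i<k. ?class i)"
    using assms(2) unfolding dominated_coloring_def by auto
  have "card (?class i) \<le> d" if "i < k" for i
  proof (cases "?class i = {}")
    case True
    then show ?thesis by (metis card.empty le0)
  next
    case False
    then obtain x where "x \<in> V" "\<forall>z\<in>V. c z = i \<longrightarrow> adj E x z"
      using assms(2) \<open>i < k\<close> unfolding dominated_coloring_def by blast
    then have "card (?class i) \<le> card {z \<in> V. adj E x z}"
      using assms(1) by (intro card_mono) auto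
    with degree \<open>x \<in> V\<close> show ?thesis by (meson le_trans)
  qed
  then have "(\<Sum>i<k. card (?class i)) \<le> d * k"
    using sum_mono[of "{..<k}" "\<lambda>i. card (?class i)" "\<lambda>_. d"] by (simp add: mult.commute)
  moreover have "card V \<le> (\<Sum>i<k. card (?class i))"
    by (subst cover) (rule card_UN_le, simp)
  ultimately show ?thesis by linarith
qed

lemma simple_graph_fan: "simple_graph {0..n} (fan_edges n)"
  unfolding simple_graph_def fan_edges_def path_edges_def by auto

lemma simple_graph_path: "simple_graph {1..n} (path_edges n)"
  unfolding simple_graph_def path_edges_def by auto

lemma fan_delete_centre:
  "del_vertex_V {0..n} 0 = {1..n}" "del_vertex_E (fan_edges n) 0 = path_edges n"
  unfolding del_vertex_V_def del_vertex_E_def fan_edges_def path_edges_def by auto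

lemma is_walk_path_upt:
  assumes "1 \<le> i" "i \<le> j" "j \<le> n"
  shows "is_walk {1..n} (path_edges n) [i..<Suc j]"
  using assms(2,3)
proof (induction j rule: dec_induct)
  case (step m)
  have "adj (path_edges n) (last [i..<Suc m]) (Suc m)"
    using step.hyps step.prems assms(1) by (auto simp: adj_def path_edges_def)
  moreover have "Suc m \<in> {1..n}" using step.prems by simp
  moreover have "[i..<Suc (Suc m)] = [i..<Suc m] @ [Suc m]" using step.hyps by simp
  ultimately show ?case using step by (simp del: upt_Suc add: is_walk_snoc)
qed (use assms(1) in simp)

lemma connected_path: "1 \<le> n \<Longrightarrow> connected_graph {1..n} (path_edges n)"
  unfolding connected_graph_def
proof (intro conjI ballI)
  have walk: "\<exists>p. is_walk {1..n} (path_edges n) p \<and> hd p = x \<and> last p = y"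
    if "x \<in> {1..n}" "y \<in> {1..n}" "x \<le> y" for x y
    using that is_walk_path_upt[of x y n]
    by (intro exI[of _ "[x..<Suc y]"]) (simp del: upt_Suc add: hd_upt last_upt)
  fix x y assume "x \<in> {1..n}" "y \<in> {1..n}"
  then show "\<exists>p. is_walk {1..n} (path_edges n) p \<and> hd p = x \<and> last p = y"
    using walk[of x y] walk[of y x] is_walk_rev
    by (cases "x \<le> y") (force simp: hd_rev last_rev)+
qed auto

lemma connected_fan:
  assumes "1 \<le> n"
  shows "connected_graph {0..n} (fan_edges n)"
  unfolding connected_graph_def
proof (intro conjI ballI)
  fix x y assume xy: "x \<in> {0..n}" "y \<in> {0..n}"
  have spoke: "adj (fan_edges n) 0 z" "adj (fan_edges n) z 0" if "z \<in> {1..n}" for z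
    using that by (auto simp: adj_def fan_edges_def insert_commute)
  show "\<exists>p. is_walk {0..n} (fan_edges n) p \<and> hd p = x \<and> last p = y"
  proof (cases "x = 0 \<or> y = 0")
    case True
    with xy spoke show ?thesis
      by (elim disjE; cases "x = y")
        (auto intro: exI[of _ "[x]"] exI[of _ "[x, y]"])
  next
    case False
    then obtain p where "is_walk {1..n} (path_edges n) p" "hd p = x" "last p = y"
      using connected_path[OF assms] xy unfolding connected_graph_def by force
    moreover have "{1..n} \<subseteq> {0..n}" "path_edges n \<subseteq> fan_edges n"
      by (auto simp: fan_edges_def)
    ultimately show ?thesis using is_walk_mono by blast
  qed
qed auto

lemma dominated_coloring_fan:
  assumes "1 \<le> n"
  shows "dominated_coloring {0..n} (fan_edges n) (\<lambda>i. if i = 0 then 0 else if even i then 1 else 2) 3"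
  unfolding dominated_coloring_def
proof (intro conjI allI impI)
  fix i :: nat assume "i < 3"
  show "\<exists>x\<in>{0..n}. \<forall>z\<in>{0..n}. (if z = 0 then 0 else if even z then 1 else 2) = i
          \<longrightarrow> adj (fan_edges n) x z"
  proof (cases "i = 0")
    case True
    with assms show ?thesis
      by (intro bexI[of _ 1]) (auto simp: adj_def fan_edges_def insert_commute)
  next
    case False
    then show ?thesis by (intro bexI[of _ 0]) (auto simp: adj_def fan_edges_def)
  qed
qed (auto simp: adj_def fan_edges_def path_edges_def doubleton_eq_iff)

lemma dominated_coloring_path:
  assumes "2 \<le> n"
  shows "dominated_coloring {1..n} (path_edges n) (\<lambda>i. i - 1) n"
proof (rule dominated_coloring_inj[OF simple_graph_path])
  show "\<forall>x\<in>{1..n}. \<exists>y\<in>{1..n}. adj (path_edges n) y x"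
  proof
    fix x assume "x \<in> {1..n}"
    show "\<exists>y\<in>{1..n}. adj (path_edges n) y x"
    proof (cases "x = 1")
      case True
      with assms show ?thesis by (auto simp: adj_def path_edges_def intro!: bexI[of _ 2])
    next
      case False
      with \<open>x \<in> {1..n}\<close> show ?thesis
        by (auto simp: adj_def path_edges_def intro!: bexI[of _ "x - 1"] exI[of _ "x - 1"])
    qed
  qed
qed (auto simp: inj_on_def)

lemma path_degree_le_2: "card {z \<in> {1..n}. adj (path_edges n) x z} \<le> 2"
proof -
  have "{z \<in> {1..n}. adj (path_edges n) x z} \<subseteq> {x - 1, Suc x}"
    by (auto simp: adj_def path_edges_def doubleton_eq_iff)
  then have "card {z \<in> {1..n}. adj (path_edges n) x z} \<le> card {x - 1, Suc x}"
    by (intro card_mono) auto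
  also have "\<dots> \<le> 2" by (simp add: card_insert_if)
  finally show ?thesis .
qed

lemma is_chi_dom_path_lower: "is_chi_dom {1..n} (path_edges n) k \<Longrightarrow> n \<le> 2 * k"
  using card_le_degree_mult_dominated_colors[OF _ _ path_degree_le_2]
  unfolding is_chi_dom_def by fastforce

theorem theorem2p3:
  fixes N :: nat
  assumes "N > 0"
  shows "\<exists>(V :: nat set) E v k1 k2.
           simple_graph V E \<and> connected_graph V E \<and> v \<in> V \<and> \<not> cut_vertex V E v \<and>
           is_chi_dom V E k1 \<and>
           is_chi_dom (del_vertex_V V v) (del_vertex_E E v) k2 \<and>
           \<bar>int k1 - int k2\<bar> \<ge> int N"
proof -
  define n where "n = 2 * N + 6"
  have n: "2 \<le> n" by (simp add: n_def)
  obtain k1 where k1: "k1 \<le> 3" "is_chi_dom {0..n} (fan_edges n) k1"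
    using is_chi_dom_exists[OF dominated_coloring_fan] n by (meson le_trans one_le_numeral)
  obtain k2 where k2: "is_chi_dom {1..n} (path_edges n) k2"
    using is_chi_dom_exists[OF dominated_coloring_path[OF n]] by blast
  have "n \<le> 2 * k2" using is_chi_dom_path_lower[OF k2] .
  with k1(1) have "\<bar>int k1 - int k2\<bar> \<ge> int N" by (simp add: n_def)
  moreover have "\<not> cut_vertex {0..n} (fan_edges n) 0"
    using connected_path n by (simp add: cut_vertex_def fan_delete_centre)
  ultimately show ?thesis
    using simple_graph_fan connected_fan n k1(2) k2
    by (intro exI[of _ "{0..n}"] exI[of _ "fan_edges n"] exI[of _ 0] exI[of _ k1] exI[of _ k2])
      (simp add: fan_delete_centre)
qed

end
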